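(* In every nonempty $\mathcal{V}$-poset $P$: (i) every non-basic element is comparable to at least one basic element; (ii) the set of basic elements is a maximal antichain; (iii) if an element $x$ is associated to the set of all basic elements of $P$, then the only maximal antichain of $P$ containing $x$ is $\{x\}$.
   Context: All posets are finite. A $\mathcal{V}$-poset is a poset that can be generated from the empty poset by repeatedly applying: (1) disjoint union of $\mathcal{V}$-posets, (2) adding a new greatest element, (3) adding a new least element. An element $x$ is basic if: (B.1) there are no two incomparable elements $u,v$ with $x>u$ and $x>v$; (B.2) there are no two incomparable elements $u,v$ with $x<u$ and $x<v$; (B.3) there is no element $u$ with $u<x$ such that for all $w\neq u,x$ one has ($u\ge w\iff x\ge w$) and ($u\le w\iff x\le w$). An element is associated to a set $B$ of basic elements if it is comparable to every element of $B$ and incomparable to every basic element not in $B$. An antichain is a set of pairwise incomparable elements; a maximal antichain is one not properly contained in another antichain. *)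

theory Defs
  imports Main
begin

text \<open>A finite poset is represented by a carrier set A and its order relation
  R (reflexive, given as a set of pairs, contained in A \<times> A); (x,y) \<in> R means x \<le> y.\<close>

inductive vposet :: "'a set \<Rightarrow> ('a \<times> 'a) set \<Rightarrow> bool" where
  empty: "vposet {} {}"
| union: "vposet A R \<Longrightarrow> vposet B S \<Longrightarrow> A \<inter> B = {} \<Longrightarrow> vposet (A \<union> B) (R \<union> S)"
| top: "vposet A R \<Longrightarrow> t \<notin> A \<Longrightarrow>
          vposet (insert t A) (R \<union> {(y, t) | y. y \<in> insert t A})"
| bot: "vposet A R \<Longrightarrow> b \<notin> A \<Longrightarrow>
          vposet (insert b A) (R \<union> {(b, y) | y. y \<in> insert b A})"

definition pless :: "('a \<times> 'a) set \<Rightarrow> 'a \<Rightarrow> 'a \<Rightarrow> bool" where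
  "pless R x y \<longleftrightarrow> (x, y) \<in> R \<and> x \<noteq> y"

definition comparable :: "('a \<times> 'a) set \<Rightarrow> 'a \<Rightarrow> 'a \<Rightarrow> bool" where
  "comparable R x y \<longleftrightarrow> (x, y) \<in> R \<or> (y, x) \<in> R"

definition basic :: "'a set \<Rightarrow> ('a \<times> 'a) set \<Rightarrow> 'a \<Rightarrow> bool" where
  "basic A R x \<longleftrightarrow> x \<in> A
     \<and> \<not> (\<exists>u\<in>A. \<exists>v\<in>A. \<not> comparable R u v \<and> pless R u x \<and> pless R v x)
     \<and> \<not> (\<exists>u\<in>A. \<exists>v\<in>A. \<not> comparable R u v \<and> pless R x u \<and> pless R x v)
     \<and> \<not> (\<exists>u\<in>A. pless R u x \<and>
            (\<forall>w\<in>A. w \<noteq> u \<and> w \<noteq> x \<longrightarrow>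
               (((w, u) \<in> R \<longleftrightarrow> (w, x) \<in> R) \<and> ((u, w) \<in> R \<longleftrightarrow> (x, w) \<in> R))))"

definition associated :: "'a set \<Rightarrow> ('a \<times> 'a) set \<Rightarrow> 'a \<Rightarrow> 'a set \<Rightarrow> bool" where
  "associated A R x B \<longleftrightarrow> x \<in> A
     \<and> (\<forall>b\<in>B. comparable R x b)
     \<and> (\<forall>b\<in>A. basic A R b \<and> b \<notin> B \<longrightarrow> \<not> comparable R x b)"

definition antichain_in :: "'a set \<Rightarrow> ('a \<times> 'a) set \<Rightarrow> 'a set \<Rightarrow> bool" where
  "antichain_in A R S \<longleftrightarrow> S \<subseteq> A \<and> (\<forall>x\<in>S. \<forall>y\<in>S. x \<noteq> y \<longrightarrow> \<not> comparable R x y)"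

definition maximal_antichain :: "'a set \<Rightarrow> ('a \<times> 'a) set \<Rightarrow> 'a set \<Rightarrow> bool" where
  "maximal_antichain A R S \<longleftrightarrow> antichain_in A R S
     \<and> (\<forall>T. antichain_in A R T \<and> S \<subseteq> T \<longrightarrow> T = S)"

end

theory Submission
  imports Defs
begin

(* Induct along the construction of a V-poset, maintaining three facts: the basic elements form
   an antichain, every element is comparable to some basic element, and an element comparable to
   all basic elements is comparable to all elements (so the only antichain containing it is the
   singleton). The second fact makes the antichain of basic elements maximal.
   A disjoint union keeps the basic elements of both parts, and no element is comparable to all
   of them. A new top keeps the basic elements and is not basic itself: below it lie either two
   incomparable elements or a chain whose greatest element is a lower twin of the top (B.3).
   A new bottom under a chain gives a chain, whose only basic element is its minimum; under a
   non-chain it lies below an incomparable pair (B.2) and again leaves the basic elements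
   unchanged. *)

lemma partial_order_on_disjoint_union:
  assumes "partial_order_on A R" "partial_order_on B S" "A \<inter> B = {}"
  shows "partial_order_on (A \<union> B) (R \<union> S)"
  using assms unfolding partial_order_on_def preorder_on_def refl_on_def trans_def antisym_def
  by auto

lemma partial_order_on_insert_top:
  assumes "partial_order_on A R" "t \<notin> A"
  shows "partial_order_on (insert t A) (R \<union> {(y, t) | y. y \<in> insert t A})"
  using assms unfolding partial_order_on_def preorder_on_def refl_on_def trans_def antisym_def
  by auto

lemma partial_order_on_insert_bottom:
  assumes "partial_order_on A R" "b \<notin> A"
  shows "partial_order_on (insert b A) (R \<union> {(b, y) | y. y \<in> insert b A})"
  using assms unfolding partial_order_on_def preorder_on_def refl_on_def trans_def antisym_def
  by auto

lemma vposet_finite_partial_order: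
  "vposet A R \<Longrightarrow> finite A \<and> partial_order_on A R"
  by (induction rule: vposet.induct)
    (blast intro: partial_order_on_empty partial_order_on_disjoint_union
      partial_order_on_insert_top partial_order_on_insert_bottom)+

lemma wf_strict_finite_partial_order:
  assumes "finite A" "partial_order_on A R"
  shows "wf (R - Id)" "wf ((R - Id)\<inverse>)"
proof -
  have "finite (R - Id)"
    using partial_order_onD(4)[OF assms(2)] assms(1)
    by (meson Diff_subset finite_SigmaI finite_subset subset_trans)
  moreover have "trans (R - Id)"
    using partial_order_onD(2,3)[OF assms(2)] unfolding trans_def antisym_def by blast
  then have "acyclic (R - Id)"
    by (simp add: acyclic_irrefl irrefl_def)
  ultimately show "wf (R - Id)" "wf ((R - Id)\<inverse>)"
    by (simp_all add: finite_acyclic_wf finite_acyclic_wf_converse)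
qed

lemma finite_chain_has_greatest:
  assumes "finite A" "partial_order_on A R" "D \<noteq> {}"
    and "\<forall>x\<in>D. \<forall>y\<in>D. comparable R x y"
  obtains m where "m \<in> D" "\<forall>y\<in>D. (y, m) \<in> R"
proof -
  obtain m where "m \<in> D" and "\<forall>y. (y, m) \<in> (R - Id)\<inverse> \<longrightarrow> y \<notin> D"
    using wfE_min'[OF wf_strict_finite_partial_order(2)[OF assms(1,2)] assms(3)] by metis
  then show thesis
    using that assms(4) unfolding comparable_def by fastforce
qed

lemma finite_chain_has_least:
  assumes "finite A" "partial_order_on A R" "D \<noteq> {}"
    and "\<forall>x\<in>D. \<forall>y\<in>D. comparable R x y"
  obtains m where "m \<in> D" "\<forall>y\<in>D. (m, y) \<in> R"
proof -
  obtain m where "m \<in> D" and "\<forall>y. (y, m) \<in> R - Id \<longrightarrow> y \<notin> D"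
    using wfE_min'[OF wf_strict_finite_partial_order(1)[OF assms(1,2)] assms(3)] by metis
  then show thesis
    using that assms(4) unfolding comparable_def by fastforce
qed

abbreviation basics :: "'a set \<Rightarrow> ('a \<times> 'a) set \<Rightarrow> 'a set" where
  "basics A R \<equiv> {b \<in> A. basic A R b}"

(* Violations of (B.1), (B.2) and (B.3) respectively. *)
definition lower_fork :: "'a set \<Rightarrow> ('a \<times> 'a) set \<Rightarrow> 'a \<Rightarrow> bool" where
  "lower_fork A R x \<longleftrightarrow> (\<exists>u\<in>A. \<exists>v\<in>A. \<not> comparable R u v \<and> pless R u x \<and> pless R v x)"

definition upper_fork :: "'a set \<Rightarrow> ('a \<times> 'a) set \<Rightarrow> 'a \<Rightarrow> bool" where
  "upper_fork A R x \<longleftrightarrow> (\<exists>u\<in>A. \<exists>v\<in>A. \<not> comparable R u v \<and> pless R x u \<and> pless R x v)"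

definition lower_twin :: "'a set \<Rightarrow> ('a \<times> 'a) set \<Rightarrow> 'a \<Rightarrow> 'a \<Rightarrow> bool" where
  "lower_twin A R u x \<longleftrightarrow> pless R u x \<and> (\<forall>w\<in>A. w \<noteq> u \<and> w \<noteq> x \<longrightarrow>
     ((w, u) \<in> R \<longleftrightarrow> (w, x) \<in> R) \<and> ((u, w) \<in> R \<longleftrightarrow> (x, w) \<in> R))"

lemma basic_iff_no_fork_no_twin:
  "basic A R x \<longleftrightarrow>
     x \<in> A \<and> \<not> lower_fork A R x \<and> \<not> upper_fork A R x \<and> \<not> (\<exists>u\<in>A. lower_twin A R u x)"
  unfolding basic_def lower_fork_def upper_fork_def lower_twin_def by blast

lemma below_incomparable_pair_not_basic:
  assumes "u \<in> A" "v \<in> A" "\<not> comparable R u v" "(x, u) \<in> R" "(x, v) \<in> R"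
  shows "\<not> basic A R x"
proof -
  have "pless R x u" "pless R x v"
    using assms(3-5) unfolding pless_def comparable_def by blast+
  then have "upper_fork A R x"
    using assms(1-3) unfolding upper_fork_def by blast
  then show ?thesis
    by (simp add: basic_iff_no_fork_no_twin)
qed

(* If the elements below x are pairwise comparable, the greatest of them is a lower twin of x. *)
lemma comparable_to_all_not_basic:
  assumes "finite A" "partial_order_on A R" "x \<in> A" "\<forall>y\<in>A. comparable R x y"
    and "u \<in> A" "pless R u x"
  shows "\<not> basic A R x"
proof
  assume basic: "basic A R x"
  define D where "D = {v \<in> A. pless R v x}"
  have "\<not> lower_fork A R x"
    using basic by (simp add: basic_iff_no_fork_no_twin)
  then have "\<forall>v\<in>D. \<forall>w\<in>D. comparable R v w"
    unfolding lower_fork_def D_def by blast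
  moreover have "D \<noteq> {}"
    using assms(5,6) unfolding D_def by blast
  ultimately obtain m where m: "m \<in> D" "\<forall>y\<in>D. (y, m) \<in> R"
    using finite_chain_has_greatest[OF assms(1,2)] by metis
  have trans: "trans R" and antisym: "antisym R"
    using assms(2) by (simp_all add: partial_order_onD)
  have "lower_twin A R m x"
    unfolding lower_twin_def
  proof (intro conjI ballI impI iffI)
    show "pless R m x" using m(1) unfolding D_def by blast
    fix w assume w: "w \<in> A" "w \<noteq> m \<and> w \<noteq> x"
    show "(w, x) \<in> R" if "(w, m) \<in> R"
      using that \<open>pless R m x\<close> trans unfolding pless_def by (meson transD)
    show "(w, m) \<in> R" if "(w, x) \<in> R"
      using that w m(2) unfolding D_def pless_def by blast
    show "(m, w) \<in> R" if "(x, w) \<in> R"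
      using that \<open>pless R m x\<close> trans unfolding pless_def by (meson transD)
    show "(x, w) \<in> R" if "(m, w) \<in> R"
    proof (rule ccontr)
      assume "(x, w) \<notin> R"
      then have "w \<in> D"
        using assms(4) w unfolding D_def pless_def comparable_def by blast
      then show False
        using that m(2) w antisym by (metis antisymD)
    qed
  qed
  then show False
    using basic m(1) unfolding basic_iff_no_fork_no_twin D_def by blast
qed

lemma comparable_converse [simp]: "comparable (R\<inverse>) u v \<longleftrightarrow> comparable R u v"
  unfolding comparable_def by blast

lemma lower_fork_converse: "lower_fork A (R\<inverse>) x \<longleftrightarrow> upper_fork A R x"
  unfolding lower_fork_def upper_fork_def pless_def by auto

lemma upper_fork_extension:
  assumes "R \<subseteq> A \<times> A" "A \<subseteq> A'" "x \<in> A"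
    and agree: "\<forall>u\<in>A. \<forall>v\<in>A. (u, v) \<in> R' \<longleftrightarrow> (u, v) \<in> R"
    and new_universal: "\<forall>e\<in>A' - A. comparable R' e x \<longrightarrow> (\<forall>y\<in>A'. comparable R' e y)"
  shows "upper_fork A' R' x \<longleftrightarrow> upper_fork A R x"
proof -
  have cmp: "comparable R' u v \<longleftrightarrow> comparable R u v" if "u \<in> A" "v \<in> A" for u v
    using that agree unfolding comparable_def by blast
  have above: "pless R' x u \<longleftrightarrow> pless R x u" if "u \<in> A" for u
    using that agree assms(3) unfolding pless_def by blast
  show ?thesis
  proof
    assume "upper_fork A' R' x"
    then obtain u v where uv: "u \<in> A'" "v \<in> A'" "\<not> comparable R' u v" "pless R' x u" "pless R' x v"
      unfolding upper_fork_def by blast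
    have "u \<notin> A \<Longrightarrow> comparable R' u v" "v \<notin> A \<Longrightarrow> comparable R' v u"
      using uv new_universal unfolding pless_def comparable_def by blast+
    then have "u \<in> A" "v \<in> A"
      using uv(3) unfolding comparable_def by blast+
    then show "upper_fork A R x"
      unfolding upper_fork_def using uv above cmp by blast
  next
    assume "upper_fork A R x"
    then obtain u v where "u \<in> A" "v \<in> A" "\<not> comparable R u v" "pless R x u" "pless R x v"
      unfolding upper_fork_def by blast
    then show "upper_fork A' R' x"
      unfolding upper_fork_def using above[of u] above[of v] cmp[of u v] assms(2) by blast
  qed
qed

lemma lower_fork_extension:
  assumes "R \<subseteq> A \<times> A" "A \<subseteq> A'" "x \<in> A"
    and "\<forall>u\<in>A. \<forall>v\<in>A. (u, v) \<in> R' \<longleftrightarrow> (u, v) \<in> R"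
    and "\<forall>e\<in>A' - A. comparable R' e x \<longrightarrow> (\<forall>y\<in>A'. comparable R' e y)"
  shows "lower_fork A' R' x \<longleftrightarrow> lower_fork A R x"
proof -
  have "upper_fork A' (R'\<inverse>) x \<longleftrightarrow> upper_fork A (R\<inverse>) x"
    by (rule upper_fork_extension) (use assms in auto)
  then show ?thesis
    using lower_fork_converse[of A' "R'\<inverse>"] lower_fork_converse[of A "R\<inverse>"] by simp
qed

lemma lower_twin_extension:
  assumes "A \<subseteq> A'" "x \<in> A" "u \<in> A"
    and agree: "\<forall>u\<in>A. \<forall>v\<in>A. (u, v) \<in> R' \<longleftrightarrow> (u, v) \<in> R"
    and new_uniform: "\<forall>e\<in>A' - A. \<forall>u\<in>A.
      ((u, e) \<in> R' \<longleftrightarrow> (x, e) \<in> R') \<and> ((e, u) \<in> R' \<longleftrightarrow> (e, x) \<in> R')"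
  shows "lower_twin A' R' u x \<longleftrightarrow> lower_twin A R u x"
proof -
  define same where "same S w \<longleftrightarrow> w \<noteq> u \<and> w \<noteq> x \<longrightarrow>
    ((w, u) \<in> S \<longleftrightarrow> (w, x) \<in> S) \<and> ((u, w) \<in> S \<longleftrightarrow> (x, w) \<in> S)" for S w
  have "same R' w" if "w \<in> A' - A" for w
    using that assms(3) new_uniform unfolding same_def by blast
  then have "(\<forall>w\<in>A'. same R' w) \<longleftrightarrow> (\<forall>w\<in>A. same R' w)"
    using assms(1) by blast
  also have "\<dots> \<longleftrightarrow> (\<forall>w\<in>A. same R w)"
    using assms(2,3) agree unfolding same_def by (intro ball_cong) auto
  finally show ?thesis
    unfolding lower_twin_def same_def[symmetric] pless_def using assms(2,3) agree by blast
qed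

lemma basic_extension:
  assumes "R \<subseteq> A \<times> A" "A \<subseteq> A'" "x \<in> A"
    and agree: "\<forall>u\<in>A. \<forall>v\<in>A. (u, v) \<in> R' \<longleftrightarrow> (u, v) \<in> R"
    and new_uniform: "\<forall>e\<in>A' - A. \<forall>u\<in>A.
      ((u, e) \<in> R' \<longleftrightarrow> (x, e) \<in> R') \<and> ((e, u) \<in> R' \<longleftrightarrow> (e, x) \<in> R')"
    and new_universal: "\<forall>e\<in>A' - A. comparable R' e x \<longrightarrow> (\<forall>y\<in>A'. comparable R' e y)"
    and new_not_twin: "\<forall>e\<in>A' - A. \<not> lower_twin A' R' e x"
  shows "basic A' R' x \<longleftrightarrow> basic A R x"
proof -
  have "(\<exists>u\<in>A'. lower_twin A' R' u x) \<longleftrightarrow> (\<exists>u\<in>A. lower_twin A R u x)"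
    using lower_twin_extension[OF assms(2,3) _ agree new_uniform] new_not_twin assms(2) by blast
  then show ?thesis
    using lower_fork_extension[OF assms(1-3) agree new_universal]
      upper_fork_extension[OF assms(1-3) agree new_universal] assms(2,3)
    by (simp add: basic_iff_no_fork_no_twin subsetD)
qed

lemma basic_disjoint_union:
  assumes "R \<subseteq> A \<times> A" "S \<subseteq> B \<times> B" "A \<inter> B = {}" "x \<in> A"
  shows "basic (A \<union> B) (R \<union> S) x \<longleftrightarrow> basic A R x"
  by (rule basic_extension) (use assms in \<open>auto simp: comparable_def lower_twin_def pless_def\<close>)

(* The induction invariant; its last clause is a strengthening of claim (iii). *)
definition basic_structure :: "'a set \<Rightarrow> ('a \<times> 'a) set \<Rightarrow> bool" where
  "basic_structure A R \<longleftrightarrow> antichain_in A R (basics A R)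
     \<and> (\<forall>x\<in>A. \<exists>b\<in>basics A R. comparable R x b)
     \<and> (\<forall>x\<in>A. (\<forall>b\<in>basics A R. comparable R x b) \<longrightarrow> (\<forall>y\<in>A. comparable R x y))"

lemma basics_nonempty:
  "basic_structure A R \<Longrightarrow> A \<noteq> {} \<Longrightarrow> basics A R \<noteq> {}"
  unfolding basic_structure_def by blast

lemma basic_structure_chain:
  assumes "finite A" "partial_order_on A R" "A \<noteq> {}"
    and chain: "\<forall>x\<in>A. \<forall>y\<in>A. comparable R x y"
  shows "basic_structure A R"
proof -
  obtain m where m: "m \<in> A" "\<forall>y\<in>A. (m, y) \<in> R"
    using finite_chain_has_least[OF assms] .
  have nothing_below: "\<not> pless R u m" for u
    using m partial_order_onD(3,4)[OF assms(2)] unfolding pless_def antisym_def by blast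
  have "basic A R m"
    using m(1) nothing_below chain
    unfolding basic_iff_no_fork_no_twin lower_fork_def upper_fork_def lower_twin_def by blast
  moreover have "x = m" if "basic A R x" for x
    using that comparable_to_all_not_basic[OF assms(1,2)] m chain
    unfolding basic_def pless_def by blast
  ultimately have "basics A R = {m}"
    using m(1) by blast
  then show ?thesis
    using m(1) chain unfolding basic_structure_def antichain_in_def by auto
qed

lemma basic_structure_disjoint_union:
  assumes "R \<subseteq> A \<times> A" "S \<subseteq> B \<times> B" "A \<inter> B = {}" "A \<noteq> {}" "B \<noteq> {}"
    and "basic_structure A R" "basic_structure B S"
  shows "basic_structure (A \<union> B) (R \<union> S)"
proof -
  have basics: "basics (A \<union> B) (R \<union> S) = basics A R \<union> basics B S"
    using basic_disjoint_union[OF assms(1-3)] basic_disjoint_union[OF assms(2,1)] assms(3)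
    by (auto simp: Un_commute Int_commute)
  have cmp_A: "comparable (R \<union> S) u v \<longleftrightarrow> comparable R u v" if "u \<in> A" for u v
    using that assms(2,3) unfolding comparable_def by blast
  have cmp_B: "comparable (R \<union> S) u v \<longleftrightarrow> comparable S u v" if "u \<in> B" for u v
    using that assms(1,3) unfolding comparable_def by blast
  have across: "\<not> comparable (R \<union> S) u v" if "u \<in> A \<and> v \<in> B \<or> u \<in> B \<and> v \<in> A" for u v
    using that assms(1-3) unfolding comparable_def by blast
  have "antichain_in (A \<union> B) (R \<union> S) (basics (A \<union> B) (R \<union> S))"
    using assms(6,7) cmp_A cmp_B across
    unfolding basic_structure_def antichain_in_def basics by blast
  moreover have "\<exists>c\<in>basics (A \<union> B) (R \<union> S). comparable (R \<union> S) x c" if "x \<in> A \<union> B" for x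
    using that assms(6,7) cmp_A cmp_B unfolding basic_structure_def basics by blast
  moreover have "\<not> (\<forall>c\<in>basics (A \<union> B) (R \<union> S). comparable (R \<union> S) x c)" if "x \<in> A \<union> B" for x
  proof -
    obtain a b where "a \<in> basics A R" "b \<in> basics B S"
      using basics_nonempty assms(4-7) by blast
    then show ?thesis
      using that across[of x a] across[of x b] unfolding basics by blast
  qed
  ultimately show ?thesis
    unfolding basic_structure_def by blast
qed

lemma basic_structure_insert_universal:
  assumes "basic_structure A R" "A \<noteq> {}" "e \<notin> A"
    and agree: "\<forall>u\<in>A. \<forall>v\<in>A. comparable R' u v \<longleftrightarrow> comparable R u v"
    and universal: "\<forall>y\<in>insert e A. comparable R' e y"
    and basics: "basics (insert e A) R' = basics A R"
  shows "basic_structure (insert e A) R'"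
proof -
  have sym: "comparable R' u v \<longleftrightarrow> comparable R' v u" for u v
    unfolding comparable_def by blast
  have "antichain_in (insert e A) R' (basics A R)"
    using assms(1) agree unfolding basic_structure_def antichain_in_def by blast
  moreover have "\<exists>b\<in>basics A R. comparable R' x b" if "x \<in> insert e A" for x
  proof (cases "x = e")
    case True
    then show ?thesis
      using basics_nonempty[OF assms(1,2)] universal by blast
  next
    case False
    then show ?thesis
      using that assms(1) agree unfolding basic_structure_def by blast
  qed
  moreover have "\<forall>y\<in>insert e A. comparable R' x y"
    if "x \<in> insert e A" "\<forall>b\<in>basics A R. comparable R' x b" for x
  proof (cases "x = e")
    case True
    then show ?thesis using universal by blast
  next
    case False
    then have "\<forall>y\<in>A. comparable R x y"
      using that assms(1) agree unfolding basic_structure_def by blast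
    then show ?thesis
      using that(1) False agree universal sym by blast
  qed
  ultimately show ?thesis
    unfolding basic_structure_def basics by blast
qed

lemma basics_insert_top:
  assumes "finite A" "partial_order_on A R" "A \<noteq> {}" "t \<notin> A"
  shows "basics (insert t A) (R \<union> {(y, t) | y. y \<in> insert t A}) = basics A R"
    (is "basics ?A' ?R' = _")
proof -
  have RA: "R \<subseteq> A \<times> A"
    using assms(2) by (rule partial_order_onD)
  obtain u where "u \<in> A"
    using assms(3) by blast
  then have "\<not> basic ?A' ?R' t"
    using comparable_to_all_not_basic[OF finite_insert[THEN iffD2, OF assms(1)]
        partial_order_on_insert_top[OF assms(2,4)], of t u] assms(4)
    unfolding pless_def comparable_def by blast
  moreover have "basic ?A' ?R' x \<longleftrightarrow> basic A R x" if "x \<in> A" for x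
    by (rule basic_extension)
      (use RA that assms(4) in \<open>auto simp: comparable_def lower_twin_def pless_def\<close>)
  ultimately show ?thesis
    by blast
qed

(* A new bottom can only be a lower twin of a minimum of A, and such a minimum lies below the
   incomparable pair u, v, in A and in the extension alike. *)
lemma basics_insert_bottom:
  assumes "partial_order_on A R" "b \<notin> A"
    and uv: "u \<in> A" "v \<in> A" "\<not> comparable R u v"
  shows "basics (insert b A) (R \<union> {(b, y) | y. y \<in> insert b A}) = basics A R"
    (is "basics ?A' ?R' = _")
proof -
  have RA: "R \<subseteq> A \<times> A"
    using assms(1) by (rule partial_order_onD)
  have agree: "\<forall>u\<in>A. \<forall>v\<in>A. (u, v) \<in> ?R' \<longleftrightarrow> (u, v) \<in> R"
    using RA assms(2) by blast
  then have uv': "\<not> comparable ?R' u v"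
    using uv unfolding comparable_def by blast
  have "\<not> basic ?A' ?R' b"
    using below_incomparable_pair_not_basic[of u ?A' v ?R' b] uv uv' by blast
  moreover have "basic ?A' ?R' x \<longleftrightarrow> basic A R x" if x: "x \<in> A" for x
  proof (cases "\<forall>w\<in>A. (x, w) \<in> R")
    case True
    then show ?thesis
      using below_incomparable_pair_not_basic[of u ?A' v ?R' x]
        below_incomparable_pair_not_basic[of u A v R x] uv uv' agree x by blast
  next
    case False
    then obtain w where w: "w \<in> A" "(x, w) \<notin> R"
      by blast
    moreover have "w \<noteq> x"
      using w x partial_order_onD(1)[OF assms(1)] unfolding refl_on_def by blast
    ultimately have "\<not> lower_twin ?A' ?R' b x"
      using x assms(2) by (auto simp: lower_twin_def)
    then show ?thesis
      by (intro basic_extension) (use RA agree x assms(2) in \<open>auto simp: comparable_def\<close>)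
  qed
  ultimately show ?thesis
    by blast
qed

lemma basic_structure_insert_top:
  assumes "finite A" "partial_order_on A R" "t \<notin> A" "basic_structure A R"
  shows "basic_structure (insert t A) (R \<union> {(y, t) | y. y \<in> insert t A})"
    (is "basic_structure _ ?R'")
proof (cases "A = {}")
  case True
  then show ?thesis
    using basic_structure_chain[OF _ partial_order_on_insert_top[OF assms(2,3)]]
    unfolding comparable_def by simp
next
  case False
  have "R \<subseteq> A \<times> A"
    using assms(2) by (rule partial_order_onD)
  then have agree: "\<forall>u\<in>A. \<forall>v\<in>A. comparable ?R' u v \<longleftrightarrow> comparable R u v"
    using assms(3) unfolding comparable_def by blast
  have universal: "\<forall>y\<in>insert t A. comparable ?R' t y"
    unfolding comparable_def by blast
  show ?thesis
    by (rule basic_structure_insert_universal[OF assms(4) False assms(3) agree universal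
          basics_insert_top[OF assms(1,2) False assms(3)]])
qed

lemma basic_structure_insert_bottom:
  assumes "finite A" "partial_order_on A R" "b \<notin> A" "basic_structure A R"
  shows "basic_structure (insert b A) (R \<union> {(b, y) | y. y \<in> insert b A})"
    (is "basic_structure ?A' ?R'")
proof -
  have "R \<subseteq> A \<times> A"
    using assms(2) by (rule partial_order_onD)
  then have agree: "\<forall>u\<in>A. \<forall>v\<in>A. comparable ?R' u v \<longleftrightarrow> comparable R u v"
    using assms(3) unfolding comparable_def by blast
  show ?thesis
  proof (cases "\<forall>u\<in>A. \<forall>v\<in>A. comparable R u v")
    case True
    then have "\<forall>u\<in>?A'. \<forall>v\<in>?A'. comparable ?R' u v"
      using agree unfolding comparable_def by blast
    then show ?thesis
      using basic_structure_chain[OF _ partial_order_on_insert_bottom[OF assms(2,3)]] assms(1)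
      by blast
  next
    case False
    then obtain u v where uv: "u \<in> A" "v \<in> A" "\<not> comparable R u v"
      by blast
    have universal: "\<forall>y\<in>?A'. comparable ?R' b y"
      unfolding comparable_def by blast
    show ?thesis
      using basic_structure_insert_universal[OF assms(4) _ assms(3) agree universal
          basics_insert_bottom[OF assms(2,3) uv]] uv(1)
      by blast
  qed
qed

lemma vposet_basic_structure:
  "vposet A R \<Longrightarrow> basic_structure A R"
proof (induction rule: vposet.induct)
  case empty
  then show ?case
    by (simp add: basic_structure_def antichain_in_def)
next
  case (union A R B S)
  have rel: "R \<subseteq> A \<times> A" "S \<subseteq> B \<times> B"
    using union.hyps(1,2)[THEN vposet_finite_partial_order] partial_order_onD(4) by blast+
  then consider "A = {}" "R = {}" | "B = {}" "S = {}" | "A \<noteq> {}" "B \<noteq> {}"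
    by blast
  then show ?case
  proof cases
    case 1
    then show ?thesis using union.IH(2) by simp
  next
    case 2
    then show ?thesis using union.IH(1) by simp
  next
    case 3
    show ?thesis
      by (rule basic_structure_disjoint_union[OF rel union.hyps(3) 3 union.IH])
  qed
next
  case (top A R t)
  show ?case
    using vposet_finite_partial_order[OF top.hyps(1)]
    by (intro basic_structure_insert_top top.hyps(2) top.IH) simp_all
next
  case (bot A R b)
  show ?case
    using vposet_finite_partial_order[OF bot.hyps(1)]
    by (intro basic_structure_insert_bottom bot.hyps(2) bot.IH) simp_all
qed

lemma maximal_antichain_basics:
  assumes "basic_structure A R"
  shows "maximal_antichain A R (basics A R)"
  unfolding maximal_antichain_def
proof (intro conjI allI impI)
  show "antichain_in A R (basics A R)"
    using assms by (simp add: basic_structure_def)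
  fix T assume T: "antichain_in A R T \<and> basics A R \<subseteq> T"
  have cover: "\<forall>x\<in>A. \<exists>b\<in>basics A R. comparable R x b"
    using assms by (simp add: basic_structure_def)
  have "y \<in> basics A R" if "y \<in> T" for y
  proof -
    have "y \<in> A"
      using that T unfolding antichain_in_def by blast
    then obtain b where b: "b \<in> basics A R" "comparable R y b"
      using cover by blast
    then have "y = b"
      using that T unfolding antichain_in_def by blast
    then show ?thesis
      using b(1) by simp
  qed
  then show "T = basics A R"
    using T by blast
qed

lemma antichain_in_singleton_if_comparable_to_all:
  assumes "antichain_in A R S" "x \<in> S" "\<forall>y\<in>A. comparable R x y"
  shows "S = {x}"
proof -
  have "y = x" if "y \<in> S" for y
    using that assms unfolding antichain_in_def by (metis subsetD)
  then show ?thesis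
    using assms(2) by blast
qed

theorem proposition3p12:
  fixes A :: "'a set" and R :: "('a \<times> 'a) set"
  assumes "vposet A R" and "A \<noteq> {}"
  shows "(\<forall>x\<in>A. \<not> basic A R x \<longrightarrow> (\<exists>b\<in>A. basic A R b \<and> comparable R x b))
    \<and> maximal_antichain A R {b \<in> A. basic A R b}
    \<and> (\<forall>x\<in>A. associated A R x {b \<in> A. basic A R b} \<longrightarrow>
          (\<forall>S. maximal_antichain A R S \<and> x \<in> S \<longrightarrow> S = {x}))"
proof -
  have basic_structure: "basic_structure A R"
    using vposet_basic_structure[OF assms(1)] .
  then have cover: "\<forall>x\<in>A. \<exists>b\<in>basics A R. comparable R x b"
    and universal: "\<forall>x\<in>A. (\<forall>b\<in>basics A R. comparable R x b) \<longrightarrow> (\<forall>y\<in>A. comparable R x y)"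
    by (simp_all add: basic_structure_def)
  have "S = {x}"
    if "x \<in> A" "associated A R x (basics A R)" "maximal_antichain A R S" "x \<in> S" for x S
  proof (rule antichain_in_singleton_if_comparable_to_all)
    show "antichain_in A R S" "x \<in> S"
      using that(3,4) by (simp_all add: maximal_antichain_def)
    show "\<forall>y\<in>A. comparable R x y"
      using universal that(1,2) by (simp add: associated_def)
  qed
  then show ?thesis
    using cover maximal_antichain_basics[OF basic_structure] by blast
qed

end
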